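(* Let $n\in\mathbb{N}$, $p\in(0,1)$, let $G\in\mathcal{G}(n,p)$, and let $\ell_1,\dots,\ell_n$ be the eigenvalues of its Laplacian, with $\ell_1=0$ the zero eigenvalue. Then for all $i\in\{2,\dots,n\}$, \begin{align*} \mathbb{E}[\ell_i] &= np,\\ \mathbb{E}[\ell_i^2] &= n(n-2)p^2+2np,\\ \mathbb{E}[\ell_i^3] &= n(n-2)(n-4)p^3+6n(n-2)p^2+4np,\\ \mathbb{E}[\ell_i^4] &= n(n-7)(n-3)(n-2)p^4+6n(2n-7)(n-2)p^3+25n(n-2)p^2+8np. \end{align*}
   Context: $\mathcal{G}(n,p)$ denotes the Erdős–Rényi model: a simple undirected graph on nodes $[n]$ in which each of the $\binom{n}{2}$ possible edges is present independently with probability $p$. The Laplacian is $L=D-A$, with $A$ the adjacency matrix and $D=\mathrm{diag}(d_1,\dots,d_n)$, $d_i$ the degree of node $i$. The eigenvalues of $L$ are treated as an unordered collection of random variables $\ell_1,\dots,\ell_n$, with the convention that $\ell_1=0$ is the zero eigenvalue that every Laplacian has. *)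

theory Defs
  imports "HOL-Probability.Probability" "HOL-Combinatorics.Multiset_Permutations"
          "Jordan_Normal_Form.Char_Poly"
begin

definition pot_edges :: "nat \<Rightarrow> (nat \<times> nat) set" where
  "pot_edges n = {(i, j). i < j \<and> j < n}"

definition gnp :: "nat \<Rightarrow> real \<Rightarrow> (nat \<times> nat \<Rightarrow> bool) pmf" where
  "gnp n p = Pi_pmf (pot_edges n) False (\<lambda>_. bernoulli_pmf p)"

definition adj :: "(nat \<times> nat \<Rightarrow> bool) \<Rightarrow> nat \<Rightarrow> nat \<Rightarrow> bool" where
  "adj E i j = (if i < j then E (i, j) else if j < i then E (j, i) else False)"

definition degree :: "nat \<Rightarrow> (nat \<times> nat \<Rightarrow> bool) \<Rightarrow> nat \<Rightarrow> nat" where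
  "degree n E i = card {j. j < n \<and> adj E i j}"

definition laplacian :: "nat \<Rightarrow> (nat \<times> nat \<Rightarrow> bool) \<Rightarrow> real mat" where
  "laplacian n E = mat n n (\<lambda>(i, j).
      (if i = j then real (degree n E i) else 0) - (if adj E i j then 1 else 0))"

text \<open>Multiset of the eigenvalues of the Laplacian (with multiplicity): the roots of the
  characteristic polynomial (which splits over the reals, the matrix being symmetric).\<close>
definition lap_spectrum :: "nat \<Rightarrow> (nat \<times> nat \<Rightarrow> bool) \<Rightarrow> real multiset" where
  "lap_spectrum n E = proots (char_poly (laplacian n E))"

text \<open>The eigenvalues as an unordered collection: l_1 = 0 is the zero eigenvalue
  (one copy of 0 removed), and l_2,...,l_n are the remaining eigenvalues in uniformly
  random order.  The result is the joint law of (G, [l_2,...,l_n]); l_i = xs ! (i - 2).\<close>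
definition lap_eigs_labelled :: "nat \<Rightarrow> real \<Rightarrow> real list pmf" where
  "lap_eigs_labelled n p =
     do { E \<leftarrow> gnp n p;
          pmf_of_set (permutations_of_multiset (lap_spectrum n E - {#0#})) }"

definition moment :: "nat \<Rightarrow> real \<Rightarrow> nat \<Rightarrow> nat \<Rightarrow> real" where
  "moment n p i k = measure_pmf.expectation (lap_eigs_labelled n p) (\<lambda>xs. (xs ! (i - 2)) ^ k)"

end

theory Submission
  imports Defs "Jordan_Normal_Form.Schur_Decomposition"
begin

(* The labelled eigenvalues l_2, ..., l_n list the eigenvalues left after removing one zero in
   uniformly random order, so each l_i is distributed like a uniformly chosen one of them and
   E[l_i^k] = E[tr (L^k)] / (n - 1) for k >= 1, the removed zero contributing nothing to the power sum.
   Writing tr (L^k) = sum_{a,b} (L^j)_ab (L^(k-j))_ba with j <= 2 expresses the trace through degrees,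
   adjacency indicators and common-neighbour counts.  These are sums of independent Bernoulli
   variables, and their joint moments up to order four follow by adding one edge or vertex at a time. *)

section \<open>Uniformly random orderings of a multiset\<close>

lemma sum_permutations_of_multiset_nth:
  fixes f :: "'a \<Rightarrow> 'b::comm_monoid_add"
  assumes j: "j < size M"
  shows "(\<Sum>xs\<in>permutations_of_multiset M. f (xs ! j))
       = (\<Sum>xs\<in>permutations_of_multiset M. f (xs ! 0))"
proof -
  let ?S = "permutations_of_multiset M"
  define swap where "swap xs = xs[0 := xs ! j, j := xs ! 0]" for xs :: "'a list"
  have len: "length xs = size M" if "xs \<in> ?S" for xs
    using that by (metis permutations_of_multisetD size_mset)
  have swap_mem: "swap xs \<in> ?S" if "xs \<in> ?S" for xs
  proof -
    have "mset (swap xs) = mset xs"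
      using len[OF that] j unfolding swap_def by (intro mset_swap) auto
    then show ?thesis
      using that by (metis permutations_of_multisetD permutations_of_multisetI)
  qed
  have swap_swap: "swap (swap xs) = xs" if "xs \<in> ?S" for xs
    using len[OF that] j unfolding swap_def
    by (intro nth_equalityI) (simp_all add: nth_list_update)
  have swap_nth: "swap xs ! 0 = xs ! j" if "xs \<in> ?S" for xs
    using len[OF that] j unfolding swap_def by (simp add: nth_list_update)
  show ?thesis
    by (rule sum.reindex_bij_witness[of _ swap swap]) (simp_all add: swap_mem swap_swap swap_nth)
qed

lemma expectation_pmf_of_permutations_nth:
  fixes f :: "'a \<Rightarrow> real"
  assumes j: "j < size M"
  shows "measure_pmf.expectation (pmf_of_set (permutations_of_multiset M)) (\<lambda>xs. f (xs ! j))
       = (\<Sum>x\<in>#M. f x) / real (size M)"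
proof -
  let ?S = "permutations_of_multiset M"
  have sum_nth: "(\<Sum>k<size M. f (xs ! k)) = (\<Sum>x\<in>#M. f x)" if "xs \<in> ?S" for xs
  proof -
    have m: "mset xs = M" using that by (rule permutations_of_multisetD)
    then have "(\<Sum>k<size M. f (xs ! k)) = sum_list (map f xs)"
      by (auto simp: sum_list_sum_nth lessThan_atLeast0)
    then show ?thesis using m by (metis mset_map sum_mset_sum_list)
  qed
  have "real (size M) * (\<Sum>xs\<in>?S. f (xs ! 0)) = (\<Sum>k<size M. \<Sum>xs\<in>?S. f (xs ! 0))"
    by simp
  also have "\<dots> = (\<Sum>k<size M. \<Sum>xs\<in>?S. f (xs ! k))"
    by (intro sum.cong refl sum_permutations_of_multiset_nth[symmetric]) simp
  also have "\<dots> = (\<Sum>xs\<in>?S. \<Sum>k<size M. f (xs ! k))"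
    by (rule sum.swap)
  also have "\<dots> = real (card ?S) * (\<Sum>x\<in>#M. f x)"
    by (simp add: sum_nth)
  finally have key: "real (size M) * (\<Sum>xs\<in>?S. f (xs ! 0)) = real (card ?S) * (\<Sum>x\<in>#M. f x)" .
  have "real (card ?S) > 0" by (simp add: card_gt_0_iff)
  moreover have "real (size M) > 0" using j by simp
  ultimately have "(\<Sum>xs\<in>?S. f (xs ! 0)) / real (card ?S) = (\<Sum>x\<in>#M. f x) / real (size M)"
    using key by (subst frac_eq_eq) (auto simp: mult.commute)
  then show ?thesis
    by (simp add: integral_pmf_of_set sum_permutations_of_multiset_nth[OF j])
qed

section \<open>Power sums of the eigenvalues of a real symmetric matrix\<close>

definition mat_trace :: "'a::comm_monoid_add mat \<Rightarrow> 'a" where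
  "mat_trace A = (\<Sum>i<dim_row A. A $$ (i, i))"

lemma index_mult_mat_sum:
  assumes "X \<in> carrier_mat n m" "Y \<in> carrier_mat m k" "i < n" "j < k"
  shows "(X * Y) $$ (i, j) = (\<Sum>l<m. X $$ (i, l) * Y $$ (l, j))"
  using assms by (simp add: scalar_prod_def lessThan_atLeast0)

lemma mat_trace_mult:
  fixes X Y :: "'a::semiring_0 mat"
  assumes X: "X \<in> carrier_mat n m" and Y: "Y \<in> carrier_mat m n"
  shows "mat_trace (X * Y) = (\<Sum>i<n. \<Sum>l<m. X $$ (i, l) * Y $$ (l, i))"
proof -
  have "dim_row (X * Y) = n" using X by simp
  then show ?thesis
    unfolding mat_trace_def by (intro sum.cong index_mult_mat_sum[OF X Y]) auto
qed

lemma mat_trace_mult_comm: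
  fixes X Y :: "'a::comm_semiring_0 mat"
  assumes X: "X \<in> carrier_mat n m" and Y: "Y \<in> carrier_mat m n"
  shows "mat_trace (X * Y) = mat_trace (Y * X)"
  unfolding mat_trace_mult[OF X Y] mat_trace_mult[OF Y X]
  by (subst sum.swap) (simp add: mult.commute)

lemma upper_triangular_mult:
  fixes X Y :: "'a::semiring_0 mat"
  assumes X: "X \<in> carrier_mat n n" and Y: "Y \<in> carrier_mat n n"
    and uX: "upper_triangular X" and uY: "upper_triangular Y"
  shows "upper_triangular (X * Y)"
    and "i < n \<Longrightarrow> (X * Y) $$ (i, i) = X $$ (i, i) * Y $$ (i, i)"
proof -
  have vanish: "X $$ (i, l) * Y $$ (l, j) = 0" if "i < n" "l < n" "l < i \<or> j < l" for i j l
    using that X Y upper_triangularD[OF uX] upper_triangularD[OF uY] by auto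
  show "upper_triangular (X * Y)"
  proof (rule upper_triangularI)
    fix i j assume "j < i" "i < dim_row (X * Y)"
    then show "(X * Y) $$ (i, j) = 0"
      using X Y by (subst index_mult_mat_sum[OF X Y]) (auto intro!: sum.neutral vanish)
  qed
  assume i: "i < n"
  have "(X * Y) $$ (i, i) = X $$ (i, i) * Y $$ (i, i) + (\<Sum>l\<in>{..<n} - {i}. X $$ (i, l) * Y $$ (l, i))"
    using i by (simp add: index_mult_mat_sum[OF X Y] sum.remove[of _ i])
  also have "(\<Sum>l\<in>{..<n} - {i}. X $$ (i, l) * Y $$ (l, i)) = 0"
    by (intro sum.neutral ballI vanish) (use i in auto)
  finally show "(X * Y) $$ (i, i) = X $$ (i, i) * Y $$ (i, i)" by simp
qed

lemma upper_triangular_pow_mat: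
  fixes B :: "'a::comm_semiring_1 mat"
  assumes B: "B \<in> carrier_mat n n" and uB: "upper_triangular B"
  shows "upper_triangular (B ^\<^sub>m k) \<and> (\<forall>i<n. (B ^\<^sub>m k) $$ (i, i) = B $$ (i, i) ^ k)"
proof (induction k)
  case 0
  then show ?case using B by auto
next
  case (Suc k)
  have "B ^\<^sub>m k \<in> carrier_mat n n" using B by simp
  then show ?case
    using upper_triangular_mult[OF _ B _ uB] Suc by (simp add: mult.commute)
qed

lemma power_sum_roots_char_poly:
  fixes A :: "'a::conjugatable_ordered_field mat"
  assumes A: "A \<in> carrier_mat n n" and cp: "char_poly A = (\<Prod>e\<leftarrow>es. [:-e, 1:])"
  shows "(\<Sum>e\<leftarrow>es. e ^ k) = mat_trace (A ^\<^sub>m k)"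
proof -
  obtain B P Q where "schur_decomposition A es = (B, P, Q)"
    by (cases "schur_decomposition A es") auto
  from schur_decomposition[OF A cp this]
  have wit: "similar_mat_wit A B P Q" and uB: "upper_triangular B" and dB: "diag_mat B = es"
    by auto
  then have B: "B \<in> carrier_mat n n" and P: "P \<in> carrier_mat n n" and Q: "Q \<in> carrier_mat n n"
    and QP: "Q * P = 1\<^sub>m n"
    using A unfolding similar_mat_wit_def Let_def by auto
  have Bk: "B ^\<^sub>m k \<in> carrier_mat n n" using B by simp
  have "mat_trace (A ^\<^sub>m k) = mat_trace (P * (B ^\<^sub>m k * Q))"
    using similar_mat_wit_pow_id[OF wit] P Q Bk by (simp add: assoc_mult_mat[of P n n _ n Q n])
  also have "\<dots> = mat_trace ((B ^\<^sub>m k * Q) * P)"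
    by (rule mat_trace_mult_comm[OF P mult_carrier_mat[OF Bk Q]])
  also have "(B ^\<^sub>m k * Q) * P = B ^\<^sub>m k"
    using Bk Q P QP by (simp add: assoc_mult_mat[of _ n n Q n P n] right_mult_one_mat)
  also have "mat_trace (B ^\<^sub>m k) = (\<Sum>i<n. B $$ (i, i) ^ k)"
    unfolding mat_trace_def using upper_triangular_pow_mat[OF B uB, of k] B by simp
  also have "\<dots> = (\<Sum>e\<leftarrow>es. e ^ k)"
  proof -
    have "es = map (\<lambda>i. B $$ (i, i)) [0..<n]" using dB B unfolding diag_mat_def by auto
    then show ?thesis by (simp add: sum_list_distinct_conv_sum_set lessThan_atLeast0)
  qed
  finally show ?thesis by simp
qed

lemma hermitian_form_real_symmetric_real:
  fixes A :: "real mat" and v :: "complex vec"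
  assumes sym: "\<And>i j. i < n \<Longrightarrow> j < n \<Longrightarrow> A $$ (i, j) = A $$ (j, i)"
  shows "Im (\<Sum>i<n. \<Sum>j<n. cnj (v $ i) * of_real (A $$ (i, j)) * v $ j) = 0"
proof -
  let ?s = "\<Sum>i<n. \<Sum>j<n. cnj (v $ i) * of_real (A $$ (i, j)) * v $ j"
  have cnj_term: "cnj (cnj (v $ i) * of_real (A $$ (i, j)) * v $ j) = cnj (v $ j) * of_real (A $$ (j, i)) * v $ i"
    if "i < n" "j < n" for i j
    using sym[OF that] by (simp add: mult_ac)
  have "cnj ?s = (\<Sum>i<n. \<Sum>j<n. cnj (v $ j) * of_real (A $$ (j, i)) * v $ i)"
    unfolding cnj_sum by (intro sum.cong refl cnj_term) auto
  also have "\<dots> = ?s"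
    by (rule sum.swap)
  finally have "Im (cnj ?s) = Im ?s" by (rule arg_cong)
  then show ?thesis unfolding cnj.sel by linarith
qed

lemma eigenvalue_real_symmetric_real:
  fixes A :: "real mat"
  assumes A: "A \<in> carrier_mat n n"
    and sym: "\<And>i j. i < n \<Longrightarrow> j < n \<Longrightarrow> A $$ (i, j) = A $$ (j, i)"
    and ev: "eigenvalue (map_mat complex_of_real A) a"
  shows "Im a = 0"
proof -
  obtain v where v: "v \<in> carrier_vec n" "v \<noteq> 0\<^sub>v n" "map_mat complex_of_real A *\<^sub>v v = a \<cdot>\<^sub>v v"
    using ev A unfolding eigenvalue_def eigenvector_def by auto
  have row: "(\<Sum>j<n. of_real (A $$ (i, j)) * v $ j) = a * v $ i" if "i < n" for i
  proof -
    have "(map_mat complex_of_real A *\<^sub>v v) $ i = (\<Sum>j<n. of_real (A $$ (i, j)) * v $ j)"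
      using A v(1) that by (simp add: scalar_prod_def lessThan_atLeast0)
    then show ?thesis using v(1,3) that by simp
  qed
  define N where "N = (\<Sum>i<n. (cmod (v $ i))\<^sup>2)"
  have row': "(\<Sum>j<n. cnj (v $ i) * of_real (A $$ (i, j)) * v $ j) = cnj (v $ i) * (a * v $ i)"
    if "i < n" for i
    unfolding row[OF that, symmetric] sum_distrib_left by (simp add: mult.assoc)
  have "(\<Sum>i<n. \<Sum>j<n. cnj (v $ i) * of_real (A $$ (i, j)) * v $ j)
      = (\<Sum>i<n. cnj (v $ i) * (a * v $ i))"
    by (intro sum.cong refl row') simp
  also have "\<dots> = a * of_real N"
    unfolding N_def of_real_sum complex_norm_square by (simp add: sum_distrib_left mult_ac)
  finally have s: "(\<Sum>i<n. \<Sum>j<n. cnj (v $ i) * of_real (A $$ (i, j)) * v $ j) = a * of_real N" .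
  have "Im (\<Sum>i<n. \<Sum>j<n. cnj (v $ i) * of_real (A $$ (i, j)) * v $ j) = 0"
    by (rule hermitian_form_real_symmetric_real) (rule sym)
  then have "Im a * N = 0"
    unfolding s by simp
  moreover have "N > 0"
  proof -
    have "\<exists>i<n. v $ i \<noteq> 0"
    proof (rule ccontr)
      assume "\<not> (\<exists>i<n. v $ i \<noteq> 0)"
      then have "v = 0\<^sub>v n" using v(1) by (intro eq_vecI) auto
      with v(2) show False by simp
    qed
    then obtain i where "i < n" "v $ i \<noteq> 0" by blast
    then show ?thesis unfolding N_def by (intro sum_pos2[of _ i]) auto
  qed
  ultimately show ?thesis by simp
qed

lemma char_poly_real_symmetric_splits:
  fixes A :: "real mat"
  assumes A: "A \<in> carrier_mat n n"
    and sym: "\<And>i j. i < n \<Longrightarrow> j < n \<Longrightarrow> A $$ (i, j) = A $$ (j, i)"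
  obtains es where "char_poly A = (\<Prod>e\<leftarrow>es. [:-e, 1:])" "length es = n"
proof -
  let ?Ac = "map_mat complex_of_real A"
  have Ac: "?Ac \<in> carrier_mat n n" using A by simp
  obtain as where as: "char_poly ?Ac = (\<Prod>a\<leftarrow>as. [:-a, 1:])" "length as = n"
    using char_poly_factorized[OF Ac] by blast
  have real: "of_real (Re a) = a" if "a \<in> set as" for a
  proof -
    have "poly (char_poly ?Ac) a = 0"
      unfolding as(1) using that by (simp add: poly_prod_list prod_list_zero_iff)
    then have "Im a = 0"
      using eigenvalue_root_char_poly[OF Ac] eigenvalue_real_symmetric_real[OF A sym] by blast
    then show ?thesis by (simp add: complex_eq_iff)
  qed
  interpret of_real_poly: map_poly_inj_comm_ring_hom complex_of_real ..
  have "map_poly complex_of_real (\<Prod>e\<leftarrow>map Re as. [:-e, 1:]) = (\<Prod>a\<leftarrow>as. [:-a, 1:])"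
    by (simp add: of_real_poly.hom_prod_list o_def real cong: map_cong)
  also have "\<dots> = map_poly complex_of_real (char_poly A)"
    unfolding as(1)[symmetric] by (rule of_real_hom.char_poly_hom[OF A])
  finally have "char_poly A = (\<Prod>e\<leftarrow>map Re as. [:-e, 1:])"
    by (rule of_real_poly.injectivity[symmetric])
  moreover have "length (map Re as) = n" using as(2) by simp
  ultimately show ?thesis by (rule that)
qed

lemma proots_prod_linear_factors: "proots (\<Prod>e\<leftarrow>es. [:-e, 1:]) = mset (es :: 'a::idom list)"
proof (induction es)
  case Nil
  then show ?case by simp
next
  case (Cons x xs)
  have nz: "(\<Prod>e\<leftarrow>xs. [:-e, 1:]) \<noteq> 0" by (auto simp: prod_list_zero_iff)
  have "(\<Prod>e\<leftarrow>x # xs. [:-e, 1:]) = [:-x, 1:] * (\<Prod>e\<leftarrow>xs. [:-e, 1:])" by simp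
  also have "proots \<dots> = proots [:-x, 1:] + proots (\<Prod>e\<leftarrow>xs. [:-e, 1:])"
    by (rule proots_mult) (use nz in auto)
  finally show ?case using Cons proots_linear_factor[of "-x"] by simp
qed

lemma proots_char_poly_real_symmetric:
  fixes A :: "real mat"
  assumes A: "A \<in> carrier_mat n n"
    and sym: "\<And>i j. i < n \<Longrightarrow> j < n \<Longrightarrow> A $$ (i, j) = A $$ (j, i)"
  shows "size (proots (char_poly A)) = n"
    and "(\<Sum>x\<in>#proots (char_poly A). x ^ k) = mat_trace (A ^\<^sub>m k)"
proof -
  obtain es where cp: "char_poly A = (\<Prod>e\<leftarrow>es. [:-e, 1:])" and "length es = n"
    using char_poly_real_symmetric_splits[OF A sym] .
  then show "size (proots (char_poly A)) = n"
    by (simp add: proots_prod_linear_factors)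
  show "(\<Sum>x\<in>#proots (char_poly A). x ^ k) = mat_trace (A ^\<^sub>m k)"
    unfolding cp proots_prod_linear_factors power_sum_roots_char_poly[OF A cp, symmetric]
    by (metis mset_map sum_mset_sum_list)
qed

section \<open>Edge indicators of G(n,p)\<close>

lemma finite_pot_edges: "finite (pot_edges n)"
proof -
  have "pot_edges n \<subseteq> {..<n} \<times> {..<n}" unfolding pot_edges_def by auto
  then show ?thesis by (rule finite_subset) auto
qed

lemma finite_set_pmf_Pi_pmf_bool:
  assumes "finite I"
  shows "finite (set_pmf (Pi_pmf I dflt (P :: 'a \<Rightarrow> bool pmf)))"
proof -
  have "set_pmf (Pi_pmf I dflt P) \<subseteq> PiE_dflt I dflt (\<lambda>_. UNIV)"
    using set_Pi_pmf_subset[OF assms, of dflt P] unfolding PiE_dflt_def by auto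
  moreover have "finite (PiE_dflt I dflt (\<lambda>_. (UNIV :: bool set)))"
    by (rule finite_PiE_dflt) (use assms in auto)
  ultimately show ?thesis by (rule finite_subset)
qed

lemma expectation_Pi_pmf_bernoulli_indicator_mult:
  fixes f :: "('a \<Rightarrow> bool) \<Rightarrow> real"
  assumes fin: "finite I" and e: "e \<in> I" and p: "0 \<le> p" "p \<le> 1"
    and indep: "\<And>g b. f (g(e := b)) = f g"
  shows "measure_pmf.expectation (Pi_pmf I False (\<lambda>_. bernoulli_pmf p)) (\<lambda>g. (if g e then 1 else 0) * f g)
       = p * measure_pmf.expectation (Pi_pmf I False (\<lambda>_. bernoulli_pmf p)) f"
proof -
  let ?P = "\<lambda>I. Pi_pmf I False (\<lambda>_. bernoulli_pmf p)"
  have I: "I = insert e (I - {e})" using e by auto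
  have fin': "finite (I - {e})" using fin by simp
  have split: "measure_pmf.expectation (?P I) h = (\<Sum>b\<in>UNIV. pmf (bernoulli_pmf p) b *
      measure_pmf.expectation (?P (I - {e})) (\<lambda>g. h (g(e := b))))" for h :: "('a \<Rightarrow> bool) \<Rightarrow> real"
  proof -
    have "?P I = do {b \<leftarrow> bernoulli_pmf p; map_pmf (\<lambda>g. g(e := b)) (?P (I - {e}))}"
      by (subst I, subst Pi_pmf_insert'[OF fin']) (auto simp: map_pmf_def)
    also have "measure_pmf.expectation \<dots> h = (\<Sum>b\<in>UNIV. pmf (bernoulli_pmf p) b *\<^sub>R
        measure_pmf.expectation (map_pmf (\<lambda>g. g(e := b)) (?P (I - {e}))) h)"
      by (rule pmf_expectation_bind) (auto intro: finite_set_pmf_Pi_pmf_bool[OF fin'])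
    finally show ?thesis by (simp add: fun_upd_def)
  qed
  have UNIV_bool: "(UNIV :: bool set) = {True, False}" by auto
  show ?thesis
    using p by (simp add: split UNIV_bool indep algebra_simps)
qed

definition gnp_exp :: "nat \<Rightarrow> real \<Rightarrow> ((nat \<times> nat \<Rightarrow> bool) \<Rightarrow> real) \<Rightarrow> real" where
  "gnp_exp n p f = measure_pmf.expectation (gnp n p) f"

lemma finite_set_pmf_gnp: "finite (set_pmf (gnp n p))"
  unfolding gnp_def by (rule finite_set_pmf_Pi_pmf_bool[OF finite_pot_edges])

lemma integrable_gnp: "integrable (measure_pmf (gnp n p)) (f :: _ \<Rightarrow> real)"
  by (rule integrable_measure_pmf_finite[OF finite_set_pmf_gnp])

lemma gnp_exp_add: "gnp_exp n p (\<lambda>E. f E + g E) = gnp_exp n p f + gnp_exp n p g"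
  unfolding gnp_exp_def by (rule Bochner_Integration.integral_add[OF integrable_gnp integrable_gnp])

lemma gnp_exp_diff: "gnp_exp n p (\<lambda>E. f E - g E) = gnp_exp n p f - gnp_exp n p g"
  unfolding gnp_exp_def by (rule Bochner_Integration.integral_diff[OF integrable_gnp integrable_gnp])

lemma gnp_exp_cmult: "gnp_exp n p (\<lambda>E. c * f E) = c * gnp_exp n p f"
  unfolding gnp_exp_def by (rule Bochner_Integration.integral_mult_right_zero)

lemma gnp_exp_const: "gnp_exp n p (\<lambda>E. c) = c"
  unfolding gnp_exp_def by simp

lemma gnp_exp_sum: "gnp_exp n p (\<lambda>E. \<Sum>i\<in>A. f i E) = (\<Sum>i\<in>A. gnp_exp n p (f i))"
  unfolding gnp_exp_def by (rule Bochner_Integration.integral_sum) (rule integrable_gnp)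

lemmas gnp_exp_linear = gnp_exp_add gnp_exp_diff gnp_exp_cmult gnp_exp_const

definition edge_ind :: "(nat \<times> nat \<Rightarrow> bool) \<Rightarrow> nat \<times> nat \<Rightarrow> real" where
  "edge_ind E e = (if E e then 1 else 0)"

lemma gnp_exp_edge_ind_mult:
  assumes "e \<in> pot_edges n" "0 \<le> p" "p \<le> 1" and "\<And>E b. f (E(e := b)) = f E"
  shows "gnp_exp n p (\<lambda>E. edge_ind E e * f E) = p * gnp_exp n p f"
  unfolding gnp_exp_def gnp_def edge_ind_def
  by (rule expectation_Pi_pmf_bernoulli_indicator_mult[OF finite_pot_edges assms])

definition edge_count :: "(nat \<times> nat) set \<Rightarrow> (nat \<times> nat \<Rightarrow> bool) \<Rightarrow> real" where
  "edge_count F E = (\<Sum>e\<in>F. edge_ind E e)"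

lemma edge_count_upd: "e \<notin> F \<Longrightarrow> edge_count F (E(e := b)) = edge_count F E"
  unfolding edge_count_def edge_ind_def by (intro sum.cong refl) auto

lemma gnp_exp_edge_count_insert:
  assumes F: "finite F" "e \<notin> F" and e: "e \<in> pot_edges n" and p: "0 \<le> p" "p \<le> 1"
  shows "gnp_exp n p (\<lambda>E. g (edge_count (insert e F) E))
       = gnp_exp n p (\<lambda>E. g (edge_count F E))
         + p * gnp_exp n p (\<lambda>E. g (edge_count F E + 1) - g (edge_count F E))"
proof -
  have "g (edge_count (insert e F) E)
      = g (edge_count F E) + edge_ind E e * (g (edge_count F E + 1) - g (edge_count F E))" for E
    using F by (simp add: edge_count_def edge_ind_def add.commute)
  then show ?thesis
    by (simp add: gnp_exp_add gnp_exp_edge_ind_mult[OF e p] edge_count_upd[OF F(2)])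
qed

text \<open>The first four moments of the binomial distribution with parameters card F and p.\<close>

lemma edge_count_moments:
  assumes F: "F \<subseteq> pot_edges n" and p: "0 \<le> p" "p \<le> 1"
  defines "N \<equiv> real (card F)"
  shows "gnp_exp n p (edge_count F) = N * p \<and>
    gnp_exp n p (\<lambda>E. (edge_count F E)^2) = N * p + N * (N - 1) * p^2 \<and>
    gnp_exp n p (\<lambda>E. (edge_count F E)^3) = N * p + 3 * N * (N - 1) * p^2 + N * (N - 1) * (N - 2) * p^3 \<and>
    gnp_exp n p (\<lambda>E. (edge_count F E)^4) = N * p + 7 * N * (N - 1) * p^2
      + 6 * N * (N - 1) * (N - 2) * p^3 + N * (N - 1) * (N - 2) * (N - 3) * p^4"
proof -
  have "finite F" using F finite_pot_edges by (rule finite_subset)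
  then show ?thesis
    unfolding N_def using F
  proof (induction F rule: finite_induct)
    case empty
    then show ?case by (simp add: edge_count_def gnp_exp_const)
  next
    case (insert e F)
    let ?S = "edge_count F"
    have e: "e \<in> pot_edges n" and F: "F \<subseteq> pot_edges n" using insert.prems by auto
    note IH = insert.IH[OF F]
    note step = gnp_exp_edge_count_insert[OF insert.hyps e p]
    have increments:
      "(\<lambda>E. ?S E + 1 - ?S E) = (\<lambda>E. 1)"
      "(\<lambda>E. (?S E + 1)^2 - (?S E)^2) = (\<lambda>E. 2 * ?S E + 1)"
      "(\<lambda>E. (?S E + 1)^3 - (?S E)^3) = (\<lambda>E. 3 * (?S E)^2 + 3 * ?S E + 1)"
      "(\<lambda>E. (?S E + 1)^4 - (?S E)^4) = (\<lambda>E. 4 * (?S E)^3 + 6 * (?S E)^2 + 4 * ?S E + 1)"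
      by (simp_all add: fun_eq_iff algebra_simps eval_nat_numeral)
    have card: "real (card (insert e F)) = real (card F) + 1" using insert.hyps by simp
    show ?case
      unfolding step[of "\<lambda>s. s"] step[of "\<lambda>s. s^2"] step[of "\<lambda>s. s^3"] step[of "\<lambda>s. s^4"]
        increments gnp_exp_linear IH[THEN conjunct1] IH[THEN conjunct2, THEN conjunct1]
        IH[THEN conjunct2, THEN conjunct2, THEN conjunct1] IH[THEN conjunct2, THEN conjunct2, THEN conjunct2]
        card
      by (simp add: algebra_simps eval_nat_numeral)
  qed
qed

section \<open>Degrees and common neighbours\<close>

definition edge :: "nat \<Rightarrow> nat \<Rightarrow> nat \<times> nat" where
  "edge a b = (min a b, max a b)"

definition adj_ind :: "(nat \<times> nat \<Rightarrow> bool) \<Rightarrow> nat \<Rightarrow> nat \<Rightarrow> real" where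
  "adj_ind E a b = (if adj E a b then 1 else 0)"

lemma edge_in_pot_edges: "a \<noteq> b \<Longrightarrow> a < n \<Longrightarrow> b < n \<Longrightarrow> edge a b \<in> pot_edges n"
  unfolding edge_def pot_edges_def by (auto simp: min_def max_def)

lemma edge_eq_iff: "a \<noteq> b \<Longrightarrow> edge a b = edge c d \<longleftrightarrow> (a = c \<and> b = d) \<or> (a = d \<and> b = c)"
  unfolding edge_def by (auto simp: min_def max_def split: if_splits)

lemma inj_on_edge: "a \<notin> K \<Longrightarrow> inj_on (edge a) K"
  by (rule inj_onI) (metis edge_eq_iff)

lemma adj_ind_eq_edge_ind: "adj_ind E a b = (if a = b then 0 else edge_ind E (edge a b))"
  unfolding adj_ind_def adj_def edge_def edge_ind_def by (auto simp: min_def max_def)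

lemma adj_ind_commute: "adj_ind E a b = adj_ind E b a"
  unfolding adj_ind_def adj_def by auto

lemma adj_ind_self [simp]: "adj_ind E a a = 0"
  unfolding adj_ind_def adj_def by auto

lemma adj_ind_cases: "adj_ind E a b = 0 \<or> adj_ind E a b = 1"
  unfolding adj_ind_def by auto

lemma adj_ind_idem: "adj_ind E a b * adj_ind E a b = adj_ind E a b"
  using adj_ind_cases[of E a b] by auto

lemma adj_ind_upd: "e \<noteq> edge a b \<Longrightarrow> adj_ind (E(e := t)) a b = adj_ind E a b"
  unfolding adj_ind_eq_edge_ind edge_ind_def by auto

lemma gnp_exp_adj_ind_mult:
  assumes ab: "a \<noteq> b" "a < n" "b < n" and p: "0 \<le> p" "p \<le> 1"
    and indep: "\<And>E t. f (E(edge a b := t)) = f E"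
  shows "gnp_exp n p (\<lambda>E. adj_ind E a b * f E) = p * gnp_exp n p f"
proof -
  have "(\<lambda>E. adj_ind E a b * f E) = (\<lambda>E. edge_ind E (edge a b) * f E)"
    using ab by (simp add: adj_ind_eq_edge_ind)
  then have "gnp_exp n p (\<lambda>E. adj_ind E a b * f E) = gnp_exp n p (\<lambda>E. edge_ind E (edge a b) * f E)"
    by simp
  also have "\<dots> = p * gnp_exp n p f"
    by (rule gnp_exp_edge_ind_mult[where f = f, OF edge_in_pot_edges[OF ab] p indep])
  finally show ?thesis .
qed

lemma gnp_exp_adj_ind:
  assumes "a \<noteq> b" "a < n" "b < n" "0 \<le> p" "p \<le> 1"
  shows "gnp_exp n p (\<lambda>E. adj_ind E a b) = p"
  using gnp_exp_adj_ind_mult[OF assms, of "\<lambda>_. 1"] by (simp add: gnp_exp_const)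

definition nbr_count :: "nat set \<Rightarrow> nat \<Rightarrow> (nat \<times> nat \<Rightarrow> bool) \<Rightarrow> real" where
  "nbr_count K a E = (\<Sum>c\<in>K. adj_ind E a c)"

definition common_nbr_count :: "nat set \<Rightarrow> nat \<Rightarrow> nat \<Rightarrow> (nat \<times> nat \<Rightarrow> bool) \<Rightarrow> real" where
  "common_nbr_count K a b E = (\<Sum>c\<in>K. adj_ind E a c * adj_ind E b c)"

lemma nbr_count_upd: "e \<notin> edge a ` K \<Longrightarrow> nbr_count K a (E(e := t)) = nbr_count K a E"
  unfolding nbr_count_def by (intro sum.cong refl adj_ind_upd) auto

lemma common_nbr_count_upd:
  "e \<notin> edge a ` K \<union> edge b ` K \<Longrightarrow> common_nbr_count K a b (E(e := t)) = common_nbr_count K a b E"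
proof -
  assume e: "e \<notin> edge a ` K \<union> edge b ` K"
  have "adj_ind (E(e := t)) a c = adj_ind E a c" "adj_ind (E(e := t)) b c = adj_ind E b c"
    if "c \<in> K" for c
    using e that by (auto intro!: adj_ind_upd)
  then show ?thesis unfolding common_nbr_count_def by (intro sum.cong) auto
qed

lemma nbr_count_eq_edge_count: "a \<notin> K \<Longrightarrow> nbr_count K a E = edge_count (edge a ` K) E"
  unfolding nbr_count_def edge_count_def
  by (auto simp: sum.reindex[OF inj_on_edge] adj_ind_eq_edge_ind intro!: sum.cong)

lemma degree_eq_sum_adj_ind: "real (degree n E a) = (\<Sum>c<n. adj_ind E a c)"
proof -
  have "{j. j < n \<and> adj E a j} = {..<n} \<inter> Collect (adj E a)" by auto
  then show ?thesis unfolding degree_def adj_ind_def by (simp add: sum.If_cases)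
qed

lemma degree_eq_nbr_count: "a < n \<Longrightarrow> real (degree n E a) = nbr_count ({..<n} - {a}) a E"
  unfolding degree_eq_sum_adj_ind nbr_count_def by (simp add: sum.remove[of _ a])

lemma degree_eq_adj_ind_add_nbr_count:
  assumes "a \<noteq> b" "a < n" "b < n"
  shows "real (degree n E a) = adj_ind E a b + nbr_count ({..<n} - {a, b}) a E"
proof -
  have "{..<n} - {a} = insert b ({..<n} - {a, b})" using assms by auto
  then show ?thesis
    using assms by (simp add: degree_eq_nbr_count nbr_count_def)
qed

lemma degree_moments:
  assumes a: "a < n" and p: "0 \<le> p" "p \<le> 1"
  defines "N \<equiv> real n - 1"
  shows "gnp_exp n p (\<lambda>E. real (degree n E a)) = N * p"
    and "gnp_exp n p (\<lambda>E. (real (degree n E a))^2) = N * p + N * (N - 1) * p^2"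
    and "gnp_exp n p (\<lambda>E. (real (degree n E a))^3)
      = N * p + 3 * N * (N - 1) * p^2 + N * (N - 1) * (N - 2) * p^3"
    and "gnp_exp n p (\<lambda>E. (real (degree n E a))^4) = N * p + 7 * N * (N - 1) * p^2
      + 6 * N * (N - 1) * (N - 2) * p^3 + N * (N - 1) * (N - 2) * (N - 3) * p^4"
proof -
  let ?F = "edge a ` ({..<n} - {a})"
  have "?F \<subseteq> pot_edges n" using a by (intro image_subsetI edge_in_pot_edges) auto
  moreover have "real (card ?F) = N"
    using a by (simp add: N_def card_image[OF inj_on_edge] of_nat_diff)
  moreover have "real (degree n E a) = edge_count ?F E" for E
    using a by (simp add: degree_eq_nbr_count nbr_count_eq_edge_count)
  ultimately show "gnp_exp n p (\<lambda>E. real (degree n E a)) = N * p"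
    and "gnp_exp n p (\<lambda>E. (real (degree n E a))^2) = N * p + N * (N - 1) * p^2"
    and "gnp_exp n p (\<lambda>E. (real (degree n E a))^3)
      = N * p + 3 * N * (N - 1) * p^2 + N * (N - 1) * (N - 2) * p^3"
    and "gnp_exp n p (\<lambda>E. (real (degree n E a))^4) = N * p + 7 * N * (N - 1) * p^2
      + 6 * N * (N - 1) * (N - 2) * p^3 + N * (N - 1) * (N - 2) * (N - 3) * p^4"
    using edge_count_moments[OF _ p, of ?F] by simp_all
qed

lemma gnp_exp_nbr_count:
  assumes "a \<notin> K" "K \<subseteq> {..<n}" "a < n" "0 \<le> p" "p \<le> 1"
  shows "gnp_exp n p (nbr_count K a) = real (card K) * p"
proof -
  have "edge a ` K \<subseteq> pot_edges n"
    using assms by (intro image_subsetI edge_in_pot_edges) auto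
  from edge_count_moments[OF this assms(4,5)]
  have "gnp_exp n p (edge_count (edge a ` K)) = real (card (edge a ` K)) * p" by blast
  moreover have "nbr_count K a = edge_count (edge a ` K)"
    using assms(1) by (simp add: fun_eq_iff nbr_count_eq_edge_count)
  moreover have "card (edge a ` K) = card K"
    using assms(1) by (rule card_image[OF inj_on_edge])
  ultimately show ?thesis by simp
qed

lemma gnp_exp_adj_ind_adj_ind_mult:
  assumes abc: "a \<noteq> b" "c \<noteq> a" "c \<noteq> b" "a < n" "b < n" "c < n" and p: "0 \<le> p" "p \<le> 1"
    and indep: "\<And>E t. f (E(edge a c := t)) = f E" "\<And>E t. f (E(edge b c := t)) = f E"
  shows "gnp_exp n p (\<lambda>E. adj_ind E a c * adj_ind E b c * f E) = p^2 * gnp_exp n p f"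
proof -
  have "edge a c \<noteq> edge b c" using abc by (simp add: edge_eq_iff)
  then have "gnp_exp n p (\<lambda>E. adj_ind E a c * (adj_ind E b c * f E))
      = p * gnp_exp n p (\<lambda>E. adj_ind E b c * f E)"
    using abc p by (intro gnp_exp_adj_ind_mult) (auto simp: adj_ind_upd indep)
  also have "gnp_exp n p (\<lambda>E. adj_ind E b c * f E) = p * gnp_exp n p f"
    using abc p by (intro gnp_exp_adj_ind_mult) (auto simp: indep)
  finally show ?thesis by (simp add: mult.assoc power2_eq_square)
qed

lemma common_nbr_count_insert_expand:
  fixes a b c :: nat and K :: "nat set"
  assumes "finite K" "c \<notin> K"
  defines "C \<equiv> common_nbr_count K a b" and "U \<equiv> nbr_count K a"
  shows "common_nbr_count (insert c K) a b = (\<lambda>E. adj_ind E a c * adj_ind E b c + C E)"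
    and "(\<lambda>E. (common_nbr_count (insert c K) a b E)^2)
      = (\<lambda>E. (C E)^2 + adj_ind E a c * adj_ind E b c * (2 * C E + 1))"
    and "(\<lambda>E. common_nbr_count (insert c K) a b E * nbr_count (insert c K) a E)
      = (\<lambda>E. C E * U E + adj_ind E a c * C E + adj_ind E a c * adj_ind E b c * (U E + 1))"
proof -
  have pointwise: "common_nbr_count (insert c K) a b E = adj_ind E a c * adj_ind E b c + C E"
    "(common_nbr_count (insert c K) a b E)^2 = (C E)^2 + adj_ind E a c * adj_ind E b c * (2 * C E + 1)"
    "common_nbr_count (insert c K) a b E * nbr_count (insert c K) a E
      = C E * U E + adj_ind E a c * C E + adj_ind E a c * adj_ind E b c * (U E + 1)" for E
  proof -
    have "common_nbr_count (insert c K) a b E = adj_ind E a c * adj_ind E b c + C E"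
      and "nbr_count (insert c K) a E = adj_ind E a c + U E"
      using assms by (simp_all add: common_nbr_count_def nbr_count_def)
    then show "common_nbr_count (insert c K) a b E = adj_ind E a c * adj_ind E b c + C E"
      "(common_nbr_count (insert c K) a b E)^2 = (C E)^2 + adj_ind E a c * adj_ind E b c * (2 * C E + 1)"
      "common_nbr_count (insert c K) a b E * nbr_count (insert c K) a E
        = C E * U E + adj_ind E a c * C E + adj_ind E a c * adj_ind E b c * (U E + 1)"
      using adj_ind_cases[of E a c] adj_ind_cases[of E b c] by (auto simp: algebra_simps power2_eq_square)
  qed
  show "common_nbr_count (insert c K) a b = (\<lambda>E. adj_ind E a c * adj_ind E b c + C E)"
    and "(\<lambda>E. (common_nbr_count (insert c K) a b E)^2)
      = (\<lambda>E. (C E)^2 + adj_ind E a c * adj_ind E b c * (2 * C E + 1))"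
    and "(\<lambda>E. common_nbr_count (insert c K) a b E * nbr_count (insert c K) a E)
      = (\<lambda>E. C E * U E + adj_ind E a c * C E + adj_ind E a c * adj_ind E b c * (U E + 1))"
    by (rule ext, rule pointwise)+
qed

lemma gnp_exp_common_nbr_count_insert:
  assumes ab: "a \<noteq> b" "a < n" "b < n" and p: "0 \<le> p" "p \<le> 1"
    and K: "K \<subseteq> {..<n} - {a, b}" and c: "c \<in> {..<n} - {a, b}" "c \<notin> K"
  defines "C \<equiv> common_nbr_count K a b" and "U \<equiv> nbr_count K a"
  shows "gnp_exp n p (common_nbr_count (insert c K) a b) = gnp_exp n p C + p^2"
    and "gnp_exp n p (\<lambda>E. (common_nbr_count (insert c K) a b E)^2)
      = gnp_exp n p (\<lambda>E. (C E)^2) + p^2 * (2 * gnp_exp n p C + 1)"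
    and "gnp_exp n p (\<lambda>E. common_nbr_count (insert c K) a b E * nbr_count (insert c K) a E)
      = gnp_exp n p (\<lambda>E. C E * U E) + p * gnp_exp n p C + p^2 * (gnp_exp n p U + 1)"
proof -
  have "finite K" using K by (rule finite_subset) auto
  note expand = common_nbr_count_insert_expand[OF this c(2), where a = a and b = b, folded C_def U_def]
  have "edge a c \<notin> edge a ` K \<union> edge b ` K" "edge b c \<notin> edge a ` K \<union> edge b ` K"
    using c ab K by (auto simp: edge_eq_iff)
  then have "e \<notin> edge a ` K \<union> edge b ` K" if "e = edge a c \<or> e = edge b c" for e
    using that by auto
  then have indep: "U (E(e := t)) = U E" "C (E(e := t)) = C E"
    if "e = edge a c \<or> e = edge b c" for E e t
    using that unfolding C_def U_def by (simp_all add: nbr_count_upd common_nbr_count_upd)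
  note peel_ac = gnp_exp_adj_ind_mult[of a c n p]
  note peel_both = gnp_exp_adj_ind_adj_ind_mult[of a b c n p]
  have peeled:
    "gnp_exp n p (\<lambda>E. adj_ind E a c * adj_ind E b c * 1) = p^2"
    "gnp_exp n p (\<lambda>E. adj_ind E a c * adj_ind E b c * (2 * C E + 1)) = p^2 * (2 * gnp_exp n p C + 1)"
    "gnp_exp n p (\<lambda>E. adj_ind E a c * adj_ind E b c * (U E + 1)) = p^2 * (gnp_exp n p U + 1)"
    "gnp_exp n p (\<lambda>E. adj_ind E a c * C E) = p * gnp_exp n p C"
    using ab c p by (subst peel_both peel_ac; auto simp: indep gnp_exp_linear)+
  show "gnp_exp n p (common_nbr_count (insert c K) a b) = gnp_exp n p C + p^2"
    unfolding expand(1) gnp_exp_add using peeled(1) by simp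
  show "gnp_exp n p (\<lambda>E. (common_nbr_count (insert c K) a b E)^2)
      = gnp_exp n p (\<lambda>E. (C E)^2) + p^2 * (2 * gnp_exp n p C + 1)"
    unfolding expand(2) gnp_exp_add peeled(2) ..
  show "gnp_exp n p (\<lambda>E. common_nbr_count (insert c K) a b E * nbr_count (insert c K) a E)
      = gnp_exp n p (\<lambda>E. C E * U E) + p * gnp_exp n p C + p^2 * (gnp_exp n p U + 1)"
    unfolding expand(3) gnp_exp_add peeled(3,4) ..
qed

lemma common_nbr_count_moments:
  assumes ab: "a \<noteq> b" "a < n" "b < n" and p: "0 \<le> p" "p \<le> 1"
    and K: "K \<subseteq> {..<n} - {a, b}"
  defines "k \<equiv> real (card K)"
  shows "gnp_exp n p (common_nbr_count K a b) = k * p^2 \<and>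
    gnp_exp n p (\<lambda>E. (common_nbr_count K a b E)^2) = k * p^2 + k * (k - 1) * p^4 \<and>
    gnp_exp n p (\<lambda>E. common_nbr_count K a b E * nbr_count K a E) = k * p^2 + k * (k - 1) * p^3"
proof -
  have "finite K" using K by (rule finite_subset) auto
  then show ?thesis
    unfolding k_def using K
  proof (induction K rule: finite_induct)
    case empty
    then show ?case by (simp add: nbr_count_def common_nbr_count_def gnp_exp_const)
  next
    case (insert c K)
    have c: "c \<in> {..<n} - {a, b}" and K: "K \<subseteq> {..<n} - {a, b}" using insert.prems by auto
    note IH = insert.IH[OF K]
    note step = gnp_exp_common_nbr_count_insert[OF ab p K c insert.hyps(2)]
    have "a \<notin> K" "K \<subseteq> {..<n}" using K by auto
    have card: "real (card (insert c K)) = real (card K) + 1" using insert.hyps by simp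
    show ?case
      unfolding step card gnp_exp_nbr_count[OF \<open>a \<notin> K\<close> \<open>K \<subseteq> {..<n}\<close> ab(2) p]
        IH[THEN conjunct1] IH[THEN conjunct2, THEN conjunct1] IH[THEN conjunct2, THEN conjunct2]
      by (simp add: algebra_simps eval_nat_numeral)
  qed
qed

section \<open>The Laplacian and the traces of its powers\<close>

lemma laplacian_carrier: "laplacian n E \<in> carrier_mat n n"
  unfolding laplacian_def by simp

lemma laplacian_index:
  "a < n \<Longrightarrow> b < n \<Longrightarrow>
    laplacian n E $$ (a, b) = (if a = b then real (degree n E a) else 0) - adj_ind E a b"
  unfolding laplacian_def adj_ind_def by simp

lemma laplacian_diag: "a < n \<Longrightarrow> laplacian n E $$ (a, a) = real (degree n E a)"
  by (simp add: laplacian_index)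

lemma laplacian_symmetric:
  "a < n \<Longrightarrow> b < n \<Longrightarrow> laplacian n E $$ (a, b) = laplacian n E $$ (b, a)"
  by (simp add: laplacian_index adj_ind_commute)

lemma laplacian_eigenvalue_zero:
  assumes "0 < n"
  shows "eigenvalue (laplacian n E) 0"
proof -
  let ?L = "laplacian n E" and ?one = "vec n (\<lambda>_. 1) :: real vec"
  have "?L *\<^sub>v ?one = 0 \<cdot>\<^sub>v ?one"
  proof (rule eq_vecI)
    fix a assume "a < dim_vec (0 \<cdot>\<^sub>v ?one)"
    then have a: "a < n" by simp
    have "(?L *\<^sub>v ?one) $ a = (\<Sum>b<n. ?L $$ (a, b))"
      using a laplacian_carrier[of n E] by (simp add: scalar_prod_def lessThan_atLeast0)
    also have "\<dots> = real (degree n E a) - (\<Sum>b<n. adj_ind E a b)"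
      using a by (simp add: laplacian_index sum_subtractf sum.delta)
    also have "\<dots> = 0"
      by (simp add: degree_eq_sum_adj_ind)
    finally show "(?L *\<^sub>v ?one) $ a = (0 \<cdot>\<^sub>v ?one) $ a" using a by simp
  qed (simp add: laplacian_def)
  moreover have "?one \<noteq> 0\<^sub>v n"
  proof
    assume "?one = 0\<^sub>v n"
    then have "?one $ 0 = 0\<^sub>v n $ 0" by simp
    then show False using assms by simp
  qed
  moreover have "dim_row ?L = n" by (simp add: laplacian_def)
  ultimately have "eigenvector ?L ?one 0"
    unfolding eigenvector_def by simp
  then show ?thesis
    unfolding eigenvalue_def by blast
qed

lemma laplacian_sq_diag:
  assumes a: "a < n"
  shows "(laplacian n E * laplacian n E) $$ (a, a) = (real (degree n E a))^2 + real (degree n E a)"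
proof -
  let ?L = "laplacian n E"
  have "(?L * ?L) $$ (a, a) = (\<Sum>c<n. ?L $$ (a, c) * ?L $$ (c, a))"
    by (rule index_mult_mat_sum[OF laplacian_carrier laplacian_carrier a a])
  also have "\<dots> = ?L $$ (a, a) * ?L $$ (a, a) + (\<Sum>c\<in>{..<n} - {a}. ?L $$ (a, c) * ?L $$ (c, a))"
    using a by (subst sum.remove[of _ a]) auto
  also have "(\<Sum>c\<in>{..<n} - {a}. ?L $$ (a, c) * ?L $$ (c, a)) = nbr_count ({..<n} - {a}) a E"
    unfolding nbr_count_def using a
    by (intro sum.cong refl) (auto simp: laplacian_index adj_ind_commute[of E _ a] adj_ind_idem)
  finally show ?thesis
    using a by (simp add: laplacian_index degree_eq_nbr_count power2_eq_square)
qed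

lemma laplacian_sq_offdiag:
  assumes ab: "a \<noteq> b" "a < n" "b < n"
  shows "(laplacian n E * laplacian n E) $$ (a, b) = common_nbr_count ({..<n} - {a, b}) a b E
    - adj_ind E a b * (real (degree n E a) + real (degree n E b))"
proof -
  let ?L = "laplacian n E" and ?K = "{..<n} - {a, b}"
  have split: "{..<n} = insert a (insert b ?K)" using ab by auto
  have "(?L * ?L) $$ (a, b) = (\<Sum>c<n. ?L $$ (a, c) * ?L $$ (c, b))"
    by (rule index_mult_mat_sum[OF laplacian_carrier laplacian_carrier ab(2,3)])
  also have "\<dots> = ?L $$ (a, a) * ?L $$ (a, b) + ?L $$ (a, b) * ?L $$ (b, b)
      + (\<Sum>c\<in>?K. ?L $$ (a, c) * ?L $$ (c, b))"
    using ab by (subst split) (simp add: algebra_simps)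
  also have "(\<Sum>c\<in>?K. ?L $$ (a, c) * ?L $$ (c, b)) = common_nbr_count ?K a b E"
    unfolding common_nbr_count_def using ab
    by (intro sum.cong refl) (auto simp: laplacian_index adj_ind_commute[of E _ b])
  finally show ?thesis
    using ab by (simp add: laplacian_index algebra_simps)
qed

lemma edge_count_star_pair:
  assumes "a \<noteq> b" "a \<notin> K" "b \<notin> K" "finite K"
  shows "nbr_count K a E + nbr_count K b E = edge_count (edge a ` K \<union> edge b ` K) E"
    and "card (edge a ` K \<union> edge b ` K) = 2 * card K"
proof -
  have "edge a x \<noteq> edge b y" if "x \<in> K" "y \<in> K" for x y
    using assms that by (subst edge_eq_iff) auto
  then have disjoint: "edge a ` K \<inter> edge b ` K = {}" by blast
  show "nbr_count K a E + nbr_count K b E = edge_count (edge a ` K \<union> edge b ` K) E"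
    unfolding edge_count_def using assms disjoint
    by (simp add: sum.union_disjoint nbr_count_eq_edge_count[unfolded edge_count_def])
  show "card (edge a ` K \<union> edge b ` K) = 2 * card K"
    using assms disjoint by (simp add: card_Un_disjoint card_image[OF inj_on_edge])
qed

lemma common_nbr_count_commute: "common_nbr_count K a b = common_nbr_count K b a"
  unfolding common_nbr_count_def by (simp add: mult.commute)

lemma laplacian_sq_offdiag_star_pair:
  assumes ab: "a \<noteq> b" "a < n" "b < n"
  defines "K \<equiv> {..<n} - {a, b}"
  shows "(laplacian n E * laplacian n E) $$ (a, b) = common_nbr_count K a b E
    - adj_ind E a b * (2 * adj_ind E a b + edge_count (edge a ` K \<union> edge b ` K) E)"
proof -
  have "a \<notin> K" "b \<notin> K" "finite K" and Kba: "{..<n} - {b, a} = K"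
    unfolding K_def by auto
  then have "real (degree n E a) + real (degree n E b)
      = 2 * adj_ind E a b + edge_count (edge a ` K \<union> edge b ` K) E"
    using degree_eq_adj_ind_add_nbr_count[OF ab, of E] edge_count_star_pair(1)[OF ab(1)]
      degree_eq_adj_ind_add_nbr_count[OF ab(1)[symmetric] ab(3,2), of E]
    by (simp add: K_def adj_ind_commute[of E b a])
  then show ?thesis
    using laplacian_sq_offdiag[OF ab, of E] unfolding K_def by simp
qed

lemma star_pair_upd:
  assumes "a \<noteq> b" "a < n" "b < n"
  defines "K \<equiv> {..<n} - {a, b}"
  shows "common_nbr_count K a b (E(edge a b := t)) = common_nbr_count K a b E"
    and "edge_count (edge a ` K \<union> edge b ` K) (E(edge a b := t)) = edge_count (edge a ` K \<union> edge b ` K) E"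
proof -
  have "edge a b \<notin> edge a ` K \<union> edge b ` K"
    using assms by (auto simp: edge_eq_iff)
  then show "common_nbr_count K a b (E(edge a b := t)) = common_nbr_count K a b E"
    and "edge_count (edge a ` K \<union> edge b ` K) (E(edge a b := t)) = edge_count (edge a ` K \<union> edge b ` K) E"
    by (simp_all add: common_nbr_count_upd edge_count_upd)
qed

lemma star_pair_moments:
  assumes ab: "a \<noteq> b" "a < n" "b < n" and p: "0 \<le> p" "p \<le> 1"
  defines "K \<equiv> {..<n} - {a, b}"
  defines "G \<equiv> edge a ` K \<union> edge b ` K"
  shows "gnp_exp n p (edge_count G) = 2 * (real n - 2) * p"
    and "gnp_exp n p (\<lambda>E. (edge_count G E)^2)
      = 2 * (real n - 2) * p + 2 * (real n - 2) * (2 * real n - 5) * p^2"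
    and "gnp_exp n p (common_nbr_count K a b) = (real n - 2) * p^2"
    and "gnp_exp n p (\<lambda>E. (common_nbr_count K a b E)^2)
      = (real n - 2) * p^2 + (real n - 2) * (real n - 3) * p^4"
    and "gnp_exp n p (\<lambda>E. common_nbr_count K a b E * edge_count G E)
      = 2 * ((real n - 2) * p^2 + (real n - 2) * (real n - 3) * p^3)"
proof -
  have K: "K \<subseteq> {..<n} - {a, b}" "K \<subseteq> {..<n} - {b, a}" "a \<notin> K" "b \<notin> K" "finite K"
    unfolding K_def by auto
  have card_K: "real (card K) = real n - 2"
    using ab unfolding K_def by (simp add: card_Diff_subset of_nat_diff)
  have G: "G \<subseteq> pot_edges n"
    unfolding G_def using K(1) ab by (intro Un_least image_subsetI edge_in_pot_edges) auto
  have card_G: "real (card G) = 2 * (real n - 2)"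
    unfolding G_def edge_count_star_pair(2)[OF ab(1) K(3-5)] using card_K by simp
  note moments_G = edge_count_moments[OF G p, unfolded card_G]
  show "gnp_exp n p (edge_count G) = 2 * (real n - 2) * p"
    unfolding moments_G[THEN conjunct1] ..
  show "gnp_exp n p (\<lambda>E. (edge_count G E)^2)
      = 2 * (real n - 2) * p + 2 * (real n - 2) * (2 * real n - 5) * p^2"
    unfolding moments_G[THEN conjunct2, THEN conjunct1] by (simp add: algebra_simps)
  note moments_ab = common_nbr_count_moments[OF ab p K(1), unfolded card_K]
  note moments_ba = common_nbr_count_moments[OF ab(1)[symmetric] ab(3,2) p K(2), unfolded card_K]
  show "gnp_exp n p (common_nbr_count K a b) = (real n - 2) * p^2"
    unfolding moments_ab[THEN conjunct1] ..
  show "gnp_exp n p (\<lambda>E. (common_nbr_count K a b E)^2)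
      = (real n - 2) * p^2 + (real n - 2) * (real n - 3) * p^4"
    unfolding moments_ab[THEN conjunct2, THEN conjunct1] by (simp add: algebra_simps)
  have split: "(\<lambda>E. common_nbr_count K a b E * edge_count G E)
      = (\<lambda>E. common_nbr_count K a b E * nbr_count K a E + common_nbr_count K b a E * nbr_count K b E)"
    unfolding G_def
    by (simp add: fun_eq_iff distrib_left common_nbr_count_commute[of K b a]
        flip: edge_count_star_pair(1)[OF ab(1) K(3-5)])
  show "gnp_exp n p (\<lambda>E. common_nbr_count K a b E * edge_count G E)
      = 2 * ((real n - 2) * p^2 + (real n - 2) * (real n - 3) * p^3)"
    unfolding split gnp_exp_add moments_ab[THEN conjunct2, THEN conjunct2] moments_ba[THEN conjunct2, THEN conjunct2]
    by (simp add: algebra_simps)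
qed

lemma gnp_exp_laplacian_sq_offdiag:
  assumes ab: "a \<noteq> b" "a < n" "b < n" and p: "0 \<le> p" "p \<le> 1"
  shows "gnp_exp n p (\<lambda>E. (laplacian n E * laplacian n E) $$ (a, b) * laplacian n E $$ (b, a))
      = 2 * p + 2 * (real n - 2) * p^2 - (real n - 2) * p^3"
    and "gnp_exp n p (\<lambda>E. ((laplacian n E * laplacian n E) $$ (a, b))^2)
      = 4 * p + 11 * (real n - 2) * p^2 + 2 * (real n - 2) * (2 * real n - 9) * p^3
        - 3 * (real n - 2) * (real n - 3) * p^4"
proof -
  define K where "K = {..<n} - {a, b}"
  let ?x = "\<lambda>E. adj_ind E a b" and ?C = "common_nbr_count K a b"
    and ?S = "edge_count (edge a ` K \<union> edge b ` K)"
  note sq = laplacian_sq_offdiag_star_pair[OF ab, folded K_def]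
  note moments = star_pair_moments[OF ab p, folded K_def]
  have peel: "gnp_exp n p (\<lambda>E. ?x E * h (?C E) (?S E)) = p * gnp_exp n p (\<lambda>E. h (?C E) (?S E))" for h
    by (rule gnp_exp_adj_ind_mult[OF ab p]) (simp add: star_pair_upd[OF ab, folded K_def])
  have Lba: "laplacian n E $$ (b, a) = - ?x E" for E
    using ab by (simp add: laplacian_index adj_ind_commute[of E b a])
  have "(laplacian n E * laplacian n E) $$ (a, b) * laplacian n E $$ (b, a) = ?x E * (2 + ?S E - ?C E)"
    for E using adj_ind_cases[of E a b] by (auto simp: sq Lba)
  then have peeled3: "gnp_exp n p (\<lambda>E. (laplacian n E * laplacian n E) $$ (a, b) * laplacian n E $$ (b, a))
      = p * gnp_exp n p (\<lambda>E. 2 + ?S E - ?C E)"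
    using peel[of "\<lambda>c s. 2 + s - c"] by simp
  show "gnp_exp n p (\<lambda>E. (laplacian n E * laplacian n E) $$ (a, b) * laplacian n E $$ (b, a))
      = 2 * p + 2 * (real n - 2) * p^2 - (real n - 2) * p^3"
    unfolding peeled3 gnp_exp_linear moments(1,3) by (simp add: algebra_simps eval_nat_numeral)
  have "((laplacian n E * laplacian n E) $$ (a, b))^2
      = (?C E)^2 + ?x E * (4 + 4 * ?S E + (?S E)^2 - 4 * ?C E - 2 * (?C E * ?S E))" for E
    using adj_ind_cases[of E a b] by (auto simp: sq algebra_simps power2_eq_square)
  then have peeled4: "gnp_exp n p (\<lambda>E. ((laplacian n E * laplacian n E) $$ (a, b))^2)
      = gnp_exp n p (\<lambda>E. (?C E)^2)
        + p * gnp_exp n p (\<lambda>E. 4 + 4 * ?S E + (?S E)^2 - 4 * ?C E - 2 * (?C E * ?S E))"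
    using peel[of "\<lambda>c s. 4 + 4 * s + s^2 - 4 * c - 2 * (c * s)"] by (simp add: gnp_exp_add)
  show "gnp_exp n p (\<lambda>E. ((laplacian n E * laplacian n E) $$ (a, b))^2)
      = 4 * p + 11 * (real n - 2) * p^2 + 2 * (real n - 2) * (2 * real n - 9) * p^3
        - 3 * (real n - 2) * (real n - 3) * p^4"
    unfolding peeled4 gnp_exp_linear moments by (simp add: algebra_simps eval_nat_numeral)
qed

lemma laplacian_sq_symmetric:
  assumes "a < n" "b < n"
  shows "(laplacian n E * laplacian n E) $$ (b, a) = (laplacian n E * laplacian n E) $$ (a, b)"
proof (cases "a = b")
  case False
  have "{..<n} - {b, a} = {..<n} - {a, b}" by auto
  then show ?thesis
    using False assms by (simp add: laplacian_sq_offdiag common_nbr_count_commute[of _ b a]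
        adj_ind_commute[of E b a] add.commute)
qed simp

lemma mat_trace_laplacian_pow:
  fixes n :: nat and E :: "nat \<times> nat \<Rightarrow> bool"
  defines "L \<equiv> laplacian n E"
  shows "mat_trace (L ^\<^sub>m 1) = (\<Sum>a<n. real (degree n E a))"
    and "mat_trace (L ^\<^sub>m 2) = (\<Sum>a<n. \<Sum>b<n. L $$ (a, b) * L $$ (b, a))"
    and "mat_trace (L ^\<^sub>m 3) = (\<Sum>a<n. \<Sum>b<n. (L * L) $$ (a, b) * L $$ (b, a))"
    and "mat_trace (L ^\<^sub>m 4) = (\<Sum>a<n. \<Sum>b<n. (L * L) $$ (a, b) * (L * L) $$ (b, a))"
proof -
  have L: "L \<in> carrier_mat n n" unfolding L_def by (rule laplacian_carrier)
  then have LL: "L * L \<in> carrier_mat n n" by simp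
  have "L ^\<^sub>m 4 = ((L * L) * L) * L" using L by (simp add: eval_nat_numeral)
  also have "\<dots> = (L * L) * (L * L)" by (rule assoc_mult_mat[OF LL L L])
  finally have pow4: "L ^\<^sub>m 4 = (L * L) * (L * L)" .
  have pow: "L ^\<^sub>m 1 = L" "L ^\<^sub>m 2 = L * L" "L ^\<^sub>m 3 = (L * L) * L"
    using L by (simp_all add: eval_nat_numeral)
  show "mat_trace (L ^\<^sub>m 1) = (\<Sum>a<n. real (degree n E a))"
    using L unfolding pow mat_trace_def L_def by (simp add: laplacian_diag)
  show "mat_trace (L ^\<^sub>m 2) = (\<Sum>a<n. \<Sum>b<n. L $$ (a, b) * L $$ (b, a))"
    unfolding pow by (rule mat_trace_mult[OF L L])
  show "mat_trace (L ^\<^sub>m 3) = (\<Sum>a<n. \<Sum>b<n. (L * L) $$ (a, b) * L $$ (b, a))"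
    unfolding pow by (rule mat_trace_mult[OF LL L])
  show "mat_trace (L ^\<^sub>m 4) = (\<Sum>a<n. \<Sum>b<n. (L * L) $$ (a, b) * (L * L) $$ (b, a))"
    unfolding pow4 by (rule mat_trace_mult[OF LL LL])
qed

lemma sum_diag_offdiag_const:
  fixes f :: "nat \<Rightarrow> nat \<Rightarrow> real"
  assumes diag: "\<And>a. a < n \<Longrightarrow> f a a = d"
    and offdiag: "\<And>a b. a < n \<Longrightarrow> b < n \<Longrightarrow> a \<noteq> b \<Longrightarrow> f a b = c"
  shows "(\<Sum>a<n. \<Sum>b<n. f a b) = real n * (d + (real n - 1) * c)"
proof -
  have "(\<Sum>b<n. f a b) = d + (real n - 1) * c" if a: "a < n" for a
  proof -
    have "(\<Sum>b<n. f a b) = f a a + (\<Sum>b\<in>{..<n} - {a}. f a b)"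
      using a by (subst sum.remove[of _ a]) auto
    also have "(\<Sum>b\<in>{..<n} - {a}. f a b) = (\<Sum>b\<in>{..<n} - {a}. c)"
      using a by (intro sum.cong refl offdiag) auto
    finally show ?thesis
      using a by (simp add: diag of_nat_diff)
  qed
  then show ?thesis by simp
qed

lemma gnp_exp_sum_diag_offdiag:
  assumes "\<And>a. a < n \<Longrightarrow> gnp_exp n p (f a a) = d"
    and "\<And>a b. a < n \<Longrightarrow> b < n \<Longrightarrow> a \<noteq> b \<Longrightarrow> gnp_exp n p (f a b) = c"
  shows "gnp_exp n p (\<lambda>E. \<Sum>a<n. \<Sum>b<n. f a b E) = real n * (d + (real n - 1) * c)"
  unfolding gnp_exp_sum by (rule sum_diag_offdiag_const) (use assms in auto)

lemma gnp_exp_laplacian_diag_products: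
  assumes a: "a < n" and p: "0 \<le> p" "p \<le> 1"
  defines "L \<equiv> laplacian n"
  shows "gnp_exp n p (\<lambda>E. L E $$ (a, a) * L E $$ (a, a))
      = (real n - 1) * p + (real n - 1) * (real n - 2) * p^2"
    and "gnp_exp n p (\<lambda>E. (L E * L E) $$ (a, a) * L E $$ (a, a))
      = 2 * (real n - 1) * p + 4 * (real n - 1) * (real n - 2) * p^2
        + (real n - 1) * (real n - 2) * (real n - 3) * p^3"
    and "gnp_exp n p (\<lambda>E. (L E * L E) $$ (a, a) * (L E * L E) $$ (a, a))
      = 4 * (real n - 1) * p + 14 * (real n - 1) * (real n - 2) * p^2
        + 8 * (real n - 1) * (real n - 2) * (real n - 3) * p^3
        + (real n - 1) * (real n - 2) * (real n - 3) * (real n - 4) * p^4"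
proof -
  note deg = degree_moments[OF a p]
  have square: "(\<lambda>E. L E $$ (a, a) * L E $$ (a, a)) = (\<lambda>E. (real (degree n E a))^2)"
    using a by (simp add: L_def laplacian_diag power2_eq_square)
  show "gnp_exp n p (\<lambda>E. L E $$ (a, a) * L E $$ (a, a))
      = (real n - 1) * p + (real n - 1) * (real n - 2) * p^2"
    unfolding square deg(2) by (simp add: algebra_simps)
  have cube: "(\<lambda>E. (L E * L E) $$ (a, a) * L E $$ (a, a))
      = (\<lambda>E. (real (degree n E a))^3 + (real (degree n E a))^2)"
    using a by (simp add: L_def laplacian_diag laplacian_sq_diag algebra_simps eval_nat_numeral)
  show "gnp_exp n p (\<lambda>E. (L E * L E) $$ (a, a) * L E $$ (a, a))
      = 2 * (real n - 1) * p + 4 * (real n - 1) * (real n - 2) * p^2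
        + (real n - 1) * (real n - 2) * (real n - 3) * p^3"
    unfolding cube gnp_exp_add deg(2,3) by (simp add: algebra_simps)
  have fourth: "(\<lambda>E. (L E * L E) $$ (a, a) * (L E * L E) $$ (a, a))
      = (\<lambda>E. (real (degree n E a))^4 + 2 * (real (degree n E a))^3 + (real (degree n E a))^2)"
    using a by (simp add: L_def laplacian_sq_diag algebra_simps eval_nat_numeral)
  show "gnp_exp n p (\<lambda>E. (L E * L E) $$ (a, a) * (L E * L E) $$ (a, a))
      = 4 * (real n - 1) * p + 14 * (real n - 1) * (real n - 2) * p^2
        + 8 * (real n - 1) * (real n - 2) * (real n - 3) * p^3
        + (real n - 1) * (real n - 2) * (real n - 3) * (real n - 4) * p^4"
    unfolding fourth gnp_exp_add gnp_exp_cmult deg(2,3,4) by (simp add: algebra_simps)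
qed

lemma gnp_exp_laplacian_offdiag_products:
  assumes ab: "a \<noteq> b" "a < n" "b < n" and p: "0 \<le> p" "p \<le> 1"
  defines "L \<equiv> laplacian n"
  shows "gnp_exp n p (\<lambda>E. L E $$ (a, b) * L E $$ (b, a)) = p"
    and "gnp_exp n p (\<lambda>E. (L E * L E) $$ (a, b) * L E $$ (b, a))
      = 2 * p + 2 * (real n - 2) * p^2 - (real n - 2) * p^3"
    and "gnp_exp n p (\<lambda>E. (L E * L E) $$ (a, b) * (L E * L E) $$ (b, a))
      = 4 * p + 11 * (real n - 2) * p^2 + 2 * (real n - 2) * (2 * real n - 9) * p^3
        - 3 * (real n - 2) * (real n - 3) * p^4"
proof -
  have "L E $$ (a, b) * L E $$ (b, a) = adj_ind E a b" for E
    using ab by (simp add: L_def laplacian_index adj_ind_commute[of E b a] adj_ind_idem)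
  then show "gnp_exp n p (\<lambda>E. L E $$ (a, b) * L E $$ (b, a)) = p"
    using gnp_exp_adj_ind[OF ab p] by simp
  show "gnp_exp n p (\<lambda>E. (L E * L E) $$ (a, b) * L E $$ (b, a))
      = 2 * p + 2 * (real n - 2) * p^2 - (real n - 2) * p^3"
    unfolding L_def by (rule gnp_exp_laplacian_sq_offdiag(1)[OF ab p])
  show "gnp_exp n p (\<lambda>E. (L E * L E) $$ (a, b) * (L E * L E) $$ (b, a))
      = 4 * p + 11 * (real n - 2) * p^2 + 2 * (real n - 2) * (2 * real n - 9) * p^3
        - 3 * (real n - 2) * (real n - 3) * p^4"
    using gnp_exp_laplacian_sq_offdiag(2)[OF ab p]
    by (simp add: L_def laplacian_sq_symmetric[OF ab(2,3)] power2_eq_square)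
qed

lemma gnp_exp_mat_trace_laplacian_pow:
  assumes n: "2 \<le> n" and p: "0 \<le> p" "p \<le> 1"
  shows "gnp_exp n p (\<lambda>E. mat_trace (laplacian n E ^\<^sub>m 1)) = (real n - 1) * (real n * p)"
    and "gnp_exp n p (\<lambda>E. mat_trace (laplacian n E ^\<^sub>m 2))
      = (real n - 1) * (real n * (real n - 2) * p ^ 2 + 2 * real n * p)"
    and "gnp_exp n p (\<lambda>E. mat_trace (laplacian n E ^\<^sub>m 3))
      = (real n - 1) * (real n * (real n - 2) * (real n - 4) * p ^ 3
          + 6 * real n * (real n - 2) * p ^ 2 + 4 * real n * p)"
    and "gnp_exp n p (\<lambda>E. mat_trace (laplacian n E ^\<^sub>m 4))
      = (real n - 1) * (real n * (real n - 7) * (real n - 3) * (real n - 2) * p ^ 4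
          + 6 * real n * (2 * real n - 7) * (real n - 2) * p ^ 3
          + 25 * real n * (real n - 2) * p ^ 2 + 8 * real n * p)"
proof -
  note diag = gnp_exp_laplacian_diag_products[OF _ p]
  note offdiag = gnp_exp_laplacian_offdiag_products[OF _ _ _ p]
  show "gnp_exp n p (\<lambda>E. mat_trace (laplacian n E ^\<^sub>m 1)) = (real n - 1) * (real n * p)"
    unfolding mat_trace_laplacian_pow gnp_exp_sum by (simp add: degree_moments[OF _ p])
  show "gnp_exp n p (\<lambda>E. mat_trace (laplacian n E ^\<^sub>m 2))
      = (real n - 1) * (real n * (real n - 2) * p ^ 2 + 2 * real n * p)"
    unfolding mat_trace_laplacian_pow
    by (subst gnp_exp_sum_diag_offdiag[where f = "\<lambda>a b E. laplacian n E $$ (a, b) * laplacian n E $$ (b, a)",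
        OF diag(1) offdiag(1)])
      (simp_all add: algebra_simps eval_nat_numeral)
  show "gnp_exp n p (\<lambda>E. mat_trace (laplacian n E ^\<^sub>m 3))
      = (real n - 1) * (real n * (real n - 2) * (real n - 4) * p ^ 3
          + 6 * real n * (real n - 2) * p ^ 2 + 4 * real n * p)"
    unfolding mat_trace_laplacian_pow
    by (subst gnp_exp_sum_diag_offdiag[where f = "\<lambda>a b E. (laplacian n E * laplacian n E) $$ (a, b) * laplacian n E $$ (b, a)",
        OF diag(2) offdiag(2)])
      (simp_all add: algebra_simps eval_nat_numeral)
  show "gnp_exp n p (\<lambda>E. mat_trace (laplacian n E ^\<^sub>m 4))
      = (real n - 1) * (real n * (real n - 7) * (real n - 3) * (real n - 2) * p ^ 4
          + 6 * real n * (2 * real n - 7) * (real n - 2) * p ^ 3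
          + 25 * real n * (real n - 2) * p ^ 2 + 8 * real n * p)"
    unfolding mat_trace_laplacian_pow
    by (subst gnp_exp_sum_diag_offdiag[where
          f = "\<lambda>a b E. (laplacian n E * laplacian n E) $$ (a, b) * (laplacian n E * laplacian n E) $$ (b, a)",
        OF diag(3) offdiag(3)])
      (simp_all add: algebra_simps eval_nat_numeral)
qed

section \<open>The moments of the labelled eigenvalues\<close>

lemma lap_spectrum_remove_zero:
  assumes "0 < n"
  shows "size (lap_spectrum n E - {#0#}) = n - 1"
    and "1 \<le> k \<Longrightarrow> (\<Sum>x\<in>#lap_spectrum n E - {#0#}. x ^ k) = mat_trace (laplacian n E ^\<^sub>m k)"
proof -
  note spectrum = proots_char_poly_real_symmetric[OF laplacian_carrier[of n E] laplacian_symmetric,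
      folded lap_spectrum_def]
  have "char_poly (laplacian n E) \<noteq> 0"
    using degree_monic_char_poly[OF laplacian_carrier, of n E] by auto
  then have zero: "0 \<in># lap_spectrum n E"
    using laplacian_eigenvalue_zero[OF assms, of E] eigenvalue_root_char_poly[OF laplacian_carrier]
    by (simp add: lap_spectrum_def)
  show "size (lap_spectrum n E - {#0#}) = n - 1"
    using zero spectrum(1) by (simp add: size_Diff_singleton)
  assume "1 \<le> k"
  have "(\<Sum>x\<in>#lap_spectrum n E. x ^ k) = 0 ^ k + (\<Sum>x\<in>#lap_spectrum n E - {#0#}. x ^ k)"
    by (subst insert_DiffM[OF zero, symmetric]) simp
  moreover have "(0::real) ^ k = 0" using \<open>1 \<le> k\<close> by simp
  ultimately show "(\<Sum>x\<in>#lap_spectrum n E - {#0#}. x ^ k) = mat_trace (laplacian n E ^\<^sub>m k)"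
    using spectrum(2)[of k] by simp
qed

lemma moment_eq_gnp_exp_mat_trace:
  assumes i: "2 \<le> i" "i \<le> n" and k: "1 \<le> k"
  shows "moment n p i k = gnp_exp n p (\<lambda>E. mat_trace (laplacian n E ^\<^sub>m k)) / (real n - 1)"
proof -
  have n: "0 < n" using i by simp
  have eigenvalue_moment: "measure_pmf.expectation
      (pmf_of_set (permutations_of_multiset (lap_spectrum n E - {#0#}))) (\<lambda>xs. (xs ! (i - 2)) ^ k)
      = mat_trace (laplacian n E ^\<^sub>m k) / (real n - 1)" for E
    using i n k expectation_pmf_of_permutations_nth[of "i - 2" "lap_spectrum n E - {#0#}" "\<lambda>x. x ^ k"]
    by (simp add: lap_spectrum_remove_zero of_nat_diff)
  have "moment n p i k = (\<Sum>E\<in>set_pmf (gnp n p). pmf (gnp n p) E *\<^sub>R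
      (mat_trace (laplacian n E ^\<^sub>m k) / (real n - 1)))"
    unfolding moment_def lap_eigs_labelled_def eigenvalue_moment[symmetric]
    by (rule pmf_expectation_bind[OF finite_set_pmf_gnp]) auto
  also have "\<dots> = gnp_exp n p (\<lambda>E. mat_trace (laplacian n E ^\<^sub>m k) / (real n - 1))"
    unfolding gnp_exp_def by (rule integral_measure_pmf[OF finite_set_pmf_gnp, symmetric]) auto
  finally show ?thesis
    using gnp_exp_cmult[of n p "1 / (real n - 1)" "\<lambda>E. mat_trace (laplacian n E ^\<^sub>m k)"] by simp
qed

theorem theorem1:
  fixes n i :: nat and p :: real
  assumes "0 < p" "p < 1" "2 \<le> i" "i \<le> n"
  shows "(moment n p i 1 = real n * p) \<and>
          (moment n p i 2 = real n * (real n - 2) * p ^ 2 + 2 * real n * p) \<and>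
          (moment n p i 3 = real n * (real n - 2) * (real n - 4) * p ^ 3
                          + 6 * real n * (real n - 2) * p ^ 2 + 4 * real n * p) \<and>
          (moment n p i 4 = real n * (real n - 7) * (real n - 3) * (real n - 2) * p ^ 4
                          + 6 * real n * (2 * real n - 7) * (real n - 2) * p ^ 3
                          + 25 * real n * (real n - 2) * p ^ 2 + 8 * real n * p)"
proof -
  have n: "2 \<le> n" and p: "0 \<le> p" "p \<le> 1" using assms by auto
  have "real n - 1 \<noteq> 0" using n by simp
  then show ?thesis
    unfolding moment_eq_gnp_exp_mat_trace[OF assms(3,4) order.refl]
      moment_eq_gnp_exp_mat_trace[OF assms(3,4) one_le_numeral]
      gnp_exp_mat_trace_laplacian_pow[OF n p]
    by simp
qed

end
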